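(* Let $P$ be a finite poset with $b$ bottlenecks, and let $\mathcal{S}$ denote the set of all convex subsets of $P$ with exactly one interior element. Then $$\sum_{S\in\mathcal{S}}(-1)^{|S|}=-b.$$
   Context: A subset $I\subseteq P$ is an order ideal if $x\in I$ and $y\le x$ imply $y\in I$; a subset $J\subseteq P$ is an order filter if $x\in J$ and $y\ge x$ imply $y\in J$. A subset $C\subseteq P$ is convex (in the double shelling antimatroid of $P$) if $C=P\setminus(I\cup J)$ for some order ideal $I$ and order filter $J$. An element $x$ of a convex set $C$ is interior to $C$ if it is neither a minimal nor a maximal element of $C$ (equivalently, there are $a,c\in C$ with $a<x<c$). A bottleneck of $P$ is an element that is neither maximal nor minimal in $P$ but is comparable to every element of $P$. *)

theory Defs
  imports Main
begin

text \<open>A finite poset is modelled as a finite carrier set P in a type of class order,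
  with the induced order.\<close>

definition order_ideal :: "'a::order set \<Rightarrow> 'a set \<Rightarrow> bool" where
  "order_ideal P I \<longleftrightarrow> I \<subseteq> P \<and> (\<forall>x\<in>I. \<forall>y\<in>P. y \<le> x \<longrightarrow> y \<in> I)"

definition order_filter :: "'a::order set \<Rightarrow> 'a set \<Rightarrow> bool" where
  "order_filter P J \<longleftrightarrow> J \<subseteq> P \<and> (\<forall>x\<in>J. \<forall>y\<in>P. x \<le> y \<longrightarrow> y \<in> J)"

definition convex_set :: "'a::order set \<Rightarrow> 'a set \<Rightarrow> bool" where
  "convex_set P C \<longleftrightarrow> (\<exists>I J. order_ideal P I \<and> order_filter P J \<and> C = P - (I \<union> J))"

definition interior_elem :: "'a::order set \<Rightarrow> 'a \<Rightarrow> bool" where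
  "interior_elem C x \<longleftrightarrow> x \<in> C \<and> (\<exists>a\<in>C. \<exists>c\<in>C. a < x \<and> x < c)"

definition bottleneck :: "'a::order set \<Rightarrow> 'a \<Rightarrow> bool" where
  "bottleneck P x \<longleftrightarrow> x \<in> P \<and> (\<exists>y\<in>P. y < x) \<and> (\<exists>y\<in>P. x < y)
     \<and> (\<forall>y\<in>P. x \<le> y \<or> y \<le> x)"

end

theory Submission
  imports Defs
begin

text \<open>For a point x of P, consider the sets A \<subseteq> P - {x} whose convex hull contains x. Grouping
  them by their hull C, the sets with hull C are exactly those between C minus its interior and
  C - {x}, so their alternating sum vanishes unless x is the only interior element of C, when it
  is -(-1)^|C|. Counted directly instead, these A are the sets meeting both the strict down-set
  and the strict up-set of x, and inclusion-exclusion shows their alternating sum is 1 if x is a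
  bottleneck and 0 otherwise. Summing over x gives the theorem.\<close>

lemma sum_alternating_supersets:
  assumes "finite S" "U \<subseteq> S"
  shows "(\<Sum>T | T \<subseteq> S \<and> U \<subseteq> T. (-1::'b::ring_1) ^ card T) = (if U = S then (-1) ^ card S else 0)"
proof (cases "U = S")
  case True
  then have "{T. T \<subseteq> S \<and> U \<subseteq> T} = {S}" by auto
  with True show ?thesis by simp
next
  case False
  with assms have "U \<subset> S" by blast
  have "finite {T. T \<subseteq> S \<and> U \<subseteq> T}"
    using assms(1) by (simp add: finite_subset[of _ "Pow S"] subset_iff)
  with card_subsupersets_even_odd[OF assms(1) \<open>U \<subset> S\<close>] False show ?thesis
    by (simp add: sum_alternating_cancels)
qed

lemma sum_alternating_Pow:
  assumes "finite S"
  shows "(\<Sum>T\<in>Pow S. (-1::'b::ring_1) ^ card T) = (if S = {} then 1 else 0)"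
proof -
  have "Pow S = {T. T \<subseteq> S \<and> {} \<subseteq> T}" by auto
  with sum_alternating_supersets[OF assms empty_subsetI, where 'b = 'b] show ?thesis by auto
qed

lemma sum_alternating_meeting_both:
  assumes "finite X" "D \<subseteq> X" "U \<subseteq> X" "D \<inter> U = {}"
  shows "(\<Sum>A | A \<subseteq> X \<and> A \<inter> D \<noteq> {} \<and> A \<inter> U \<noteq> {}. (-1::'b::ring_1) ^ card A)
       = (if D \<noteq> {} \<and> U \<noteq> {} \<and> X = D \<union> U then 1 else 0)"
proof -
  let ?S = "{A. A \<subseteq> X \<and> A \<inter> D \<noteq> {} \<and> A \<inter> U \<noteq> {}}"
  let ?g = "\<lambda>A. (-1::'b) ^ card A"
  have fin: "finite ?S" "finite (Pow (X - D))" "finite (Pow (X - U))"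
    using assms(1) by (auto intro: finite_subset[of _ "Pow X"])
  have "Pow X = ?S \<union> (Pow (X - D) \<union> Pow (X - U))" by blast
  also have "sum ?g \<dots> = sum ?g ?S + sum ?g (Pow (X - D) \<union> Pow (X - U))"
    using fin by (intro sum.union_disjoint) auto
  finally have "sum ?g (Pow X) = sum ?g ?S + sum ?g (Pow (X - D) \<union> Pow (X - U))" .
  moreover have "Pow (X - D) \<inter> Pow (X - U) = Pow (X - D - U)" by blast
  with sum.union_inter[OF fin(2,3), of ?g]
  have "sum ?g (Pow (X - D) \<union> Pow (X - U)) + sum ?g (Pow (X - D - U))
      = sum ?g (Pow (X - D)) + sum ?g (Pow (X - U))" by simp
  ultimately have sum_S: "sum ?g ?S = (if X = {} then 1 else 0) - (if X - D = {} then 1 else 0)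
      - (if X - U = {} then 1 else 0) + (if X - D - U = {} then 1 else 0)"
    using assms(1) by (simp add: sum_alternating_Pow algebra_simps)
  show ?thesis
  proof (cases "D = {} \<or> U = {}")
    case True
    then show ?thesis using sum_S by (elim disjE) simp_all
  next
    case False
    then have "D \<noteq> {}" "U \<noteq> {}" by blast+
    with assms(2-4) have "X \<noteq> {}" "X - D \<noteq> {}" "X - U \<noteq> {}" by blast+
    moreover have "X - D - U = {} \<longleftrightarrow> X = D \<union> U" using assms(2,3) by blast
    ultimately show ?thesis using sum_S \<open>D \<noteq> {}\<close> \<open>U \<noteq> {}\<close>
      by (simp only: if_False if_True simp_thms diff_self diff_0 add_0)
  qed
qed

definition interior_elems :: "'a::order set \<Rightarrow> 'a set" where
  "interior_elems C = {x. interior_elem C x}"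

definition convex_hull_in :: "'a::order set \<Rightarrow> 'a set \<Rightarrow> 'a set" where
  "convex_hull_in P A = {y\<in>P. \<exists>a\<in>A. \<exists>c\<in>A. a \<le> y \<and> y \<le> c}"

lemma interior_elems_subset: "interior_elems C \<subseteq> C"
  by (auto simp: interior_elems_def interior_elem_def)

lemma convex_set_iff:
  "convex_set P C \<longleftrightarrow> C \<subseteq> P \<and> (\<forall>a\<in>C. \<forall>c\<in>C. \<forall>y\<in>P. a \<le> y \<and> y \<le> c \<longrightarrow> y \<in> C)"
proof
  assume "convex_set P C"
  then obtain I J where I: "order_ideal P I" and J: "order_filter P J" and C: "C = P - (I \<union> J)"
    by (auto simp: convex_set_def)
  show "C \<subseteq> P \<and> (\<forall>a\<in>C. \<forall>c\<in>C. \<forall>y\<in>P. a \<le> y \<and> y \<le> c \<longrightarrow> y \<in> C)"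
  proof (intro conjI ballI impI)
    show "C \<subseteq> P" using C by auto
    fix a c y assume "a \<in> C" "c \<in> C" "y \<in> P" "a \<le> y \<and> y \<le> c"
    moreover from calculation have "y \<notin> I" "y \<notin> J"
      using I J C unfolding order_ideal_def order_filter_def by blast+
    ultimately show "y \<in> C" using C by blast
  qed
next
  assume C: "C \<subseteq> P \<and> (\<forall>a\<in>C. \<forall>c\<in>C. \<forall>y\<in>P. a \<le> y \<and> y \<le> c \<longrightarrow> y \<in> C)"
  let ?I = "{y\<in>P. \<not> (\<exists>c\<in>C. c \<le> y)}" and ?J = "{y\<in>P. \<not> (\<exists>c\<in>C. y \<le> c)}"
  have "order_ideal P ?I" "order_filter P ?J"
    unfolding order_ideal_def order_filter_def by (blast intro: order_trans)+
  moreover have "C = P - (?I \<union> ?J)" using C by auto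
  ultimately show "convex_set P C" unfolding convex_set_def by blast
qed

lemma finite_convex_sets: "finite P \<Longrightarrow> finite {C. convex_set P C}"
  by (rule finite_subset[of _ "Pow P"]) (auto simp: convex_set_iff)

lemma convex_set_convex_hull_in: "convex_set P (convex_hull_in P A)"
  unfolding convex_set_iff convex_hull_in_def by (blast intro: order_trans)

lemma minimal_not_interior:
  assumes "m \<in> C" "\<forall>b\<in>C. b \<le> m \<longrightarrow> m = b"
  shows "m \<notin> interior_elems C"
  using assms by (auto simp: interior_elems_def interior_elem_def less_le_not_le)

lemma maximal_not_interior:
  assumes "m \<in> C" "\<forall>b\<in>C. m \<le> b \<longrightarrow> m = b"
  shows "m \<notin> interior_elems C"
  using assms by (auto simp: interior_elems_def interior_elem_def less_le_not_le)

text \<open>The non-interior elements of a finite convex set C are its minimal and maximal elements;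
  every element of C lies between two of them.\<close>

lemma convex_hull_in_eq_iff:
  assumes "finite P" "convex_set P C" "A \<subseteq> P"
  shows "convex_hull_in P A = C \<longleftrightarrow> C - interior_elems C \<subseteq> A \<and> A \<subseteq> C"
proof
  assume hull: "convex_hull_in P A = C"
  have "A \<subseteq> C" using hull assms(3) unfolding convex_hull_in_def by blast
  moreover have "e \<in> A" if e: "e \<in> C - interior_elems C" for e
  proof (rule ccontr)
    assume "e \<notin> A"
    obtain a c where "a \<in> A" "c \<in> A" "a \<le> e" "e \<le> c"
      using e hull unfolding convex_hull_in_def by blast
    with \<open>e \<notin> A\<close> \<open>A \<subseteq> C\<close> have "interior_elem C e"
      using e unfolding interior_elem_def by (metis DiffD1 order.order_iff_strict subsetD)
    with e show False by (simp add: interior_elems_def)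
  qed
  ultimately show "C - interior_elems C \<subseteq> A \<and> A \<subseteq> C" by blast
next
  assume A: "C - interior_elems C \<subseteq> A \<and> A \<subseteq> C"
  have CP: "C \<subseteq> P" and C_convex: "\<forall>a\<in>C. \<forall>c\<in>C. \<forall>y\<in>P. a \<le> y \<and> y \<le> c \<longrightarrow> y \<in> C"
    using assms(2) unfolding convex_set_iff by blast+
  have "finite C" using CP assms(1) finite_subset by blast
  show "convex_hull_in P A = C"
  proof
    show "convex_hull_in P A \<subseteq> C"
      using A C_convex unfolding convex_hull_in_def by blast
    show "C \<subseteq> convex_hull_in P A"
    proof
      fix y assume y: "y \<in> C"
      obtain m where m: "m \<in> C" "m \<le> y" "\<forall>b\<in>C. b \<le> m \<longrightarrow> m = b"
        using finite_has_minimal2[OF \<open>finite C\<close> y] by blast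
      obtain M where M: "M \<in> C" "y \<le> M" "\<forall>b\<in>C. M \<le> b \<longrightarrow> M = b"
        using finite_has_maximal2[OF \<open>finite C\<close> y] by blast
      have "m \<in> A" "M \<in> A"
        using A m(1) M(1) minimal_not_interior[OF m(1,3)] maximal_not_interior[OF M(1,3)] by blast+
      with m(2) M(2) y CP show "y \<in> convex_hull_in P A" unfolding convex_hull_in_def by blast
    qed
  qed
qed

lemma spanning_sets_with_hull_eq:
  assumes "finite P" "convex_set P C" "x \<in> interior_elems C"
  shows "{A. A \<subseteq> P - {x} \<and> x \<in> convex_hull_in P A \<and> convex_hull_in P A = C}
      = {A. A \<subseteq> C - {x} \<and> C - interior_elems C \<subseteq> A}"
proof -
  have "C \<subseteq> P" using assms(2) by (simp add: convex_set_iff)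
  show ?thesis
  proof (intro set_eqI iffI)
    fix A assume "A \<in> {A. A \<subseteq> P - {x} \<and> x \<in> convex_hull_in P A \<and> convex_hull_in P A = C}"
    then have "A \<subseteq> P - {x}" "convex_hull_in P A = C" by auto
    then show "A \<in> {A. A \<subseteq> C - {x} \<and> C - interior_elems C \<subseteq> A}"
      using convex_hull_in_eq_iff[OF assms(1,2), of A] by blast
  next
    fix A assume "A \<in> {A. A \<subseteq> C - {x} \<and> C - interior_elems C \<subseteq> A}"
    then have "A \<subseteq> C - {x}" "C - interior_elems C \<subseteq> A" by auto
    moreover from calculation have "convex_hull_in P A = C"
      using convex_hull_in_eq_iff[OF assms(1,2), of A] \<open>C \<subseteq> P\<close> by blast
    ultimately show "A \<in> {A. A \<subseteq> P - {x} \<and> x \<in> convex_hull_in P A \<and> convex_hull_in P A = C}"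
      using \<open>C \<subseteq> P\<close> assms(3) interior_elems_subset by blast
  qed
qed

lemma sum_alternating_sets_with_hull:
  assumes "finite P" "convex_set P C"
  shows "(\<Sum>A | A \<subseteq> P - {x} \<and> x \<in> convex_hull_in P A \<and> convex_hull_in P A = C. (-1::int) ^ card A)
       = (if interior_elems C = {x} then - ((-1) ^ card C) else 0)"
proof (cases "x \<in> interior_elems C")
  case True
  have "C \<subseteq> P" using assms(2) by (simp add: convex_set_iff)
  have "x \<in> C" using True interior_elems_subset by blast
  have "finite C" using \<open>C \<subseteq> P\<close> assms(1) finite_subset by blast
  have "C - interior_elems C \<subseteq> C - {x}" using True by blast
  have ext_eq_iff: "C - interior_elems C = C - {x} \<longleftrightarrow> interior_elems C = {x}"
  proof
    assume "C - interior_elems C = C - {x}"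
    then have "interior_elems C \<subseteq> {x}" using interior_elems_subset[of C] by blast
    with True show "interior_elems C = {x}" by blast
  qed simp
  have "card C = Suc (card (C - {x}))"
    using card_Suc_Diff1[OF \<open>finite C\<close> \<open>x \<in> C\<close>] by simp
  have "(\<Sum>A | A \<subseteq> P - {x} \<and> x \<in> convex_hull_in P A \<and> convex_hull_in P A = C. (-1::int) ^ card A)
      = (\<Sum>A | A \<subseteq> C - {x} \<and> C - interior_elems C \<subseteq> A. (-1) ^ card A)"
    using spanning_sets_with_hull_eq[OF assms True] by (simp only:)
  also have "\<dots> = (if C - interior_elems C = C - {x} then (-1) ^ card (C - {x}) else 0)"
    using \<open>finite C\<close> \<open>C - interior_elems C \<subseteq> C - {x}\<close> by (intro sum_alternating_supersets) auto
  also have "\<dots> = (if interior_elems C = {x} then - ((-1) ^ card C) else 0)"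
    using ext_eq_iff \<open>card C = Suc (card (C - {x}))\<close> by simp
  finally show ?thesis .
next
  case False
  \<comment> \<open>x would be a non-interior element of C missing from A\<close>
  have "x \<notin> convex_hull_in P A" if "A \<subseteq> P - {x}" "convex_hull_in P A = C" for A
    using that False convex_hull_in_eq_iff[OF assms, of A] by blast
  then have "{A. A \<subseteq> P - {x} \<and> x \<in> convex_hull_in P A \<and> convex_hull_in P A = C} = {}" by blast
  moreover have "interior_elems C \<noteq> {x}" using False by blast
  ultimately show ?thesis by (simp only: sum.empty if_False)
qed

lemma sum_alternating_sets_spanning:
  assumes "finite P"
  shows "(\<Sum>A | A \<subseteq> P - {x} \<and> x \<in> convex_hull_in P A. (-1::int) ^ card A)
       = - (\<Sum>C | convex_set P C \<and> interior_elems C = {x}. (-1) ^ card C)"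
proof -
  let ?A = "{A. A \<subseteq> P - {x} \<and> x \<in> convex_hull_in P A}" and ?K = "{C. convex_set P C}"
  have "finite ?A" using assms by (auto intro: finite_subset[of _ "Pow P"])
  moreover have "convex_hull_in P ` ?A \<subseteq> ?K"
    by (simp add: image_subset_iff convex_set_convex_hull_in)
  ultimately have "(\<Sum>A\<in>?A. (-1::int) ^ card A)
      = (\<Sum>C\<in>?K. \<Sum>A | A \<in> ?A \<and> convex_hull_in P A = C. (-1) ^ card A)"
    by (rule sum.group[OF _ finite_convex_sets[OF assms], symmetric])
  also have "\<dots> = (\<Sum>C\<in>?K. if interior_elems C = {x} then - ((-1) ^ card C) else 0)"
    using sum_alternating_sets_with_hull[OF assms] by (intro sum.cong) (simp_all add: conj_assoc)
  also have "\<dots> = - (\<Sum>C | convex_set P C \<and> interior_elems C = {x}. (-1) ^ card C)"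
    using finite_convex_sets[OF assms] by (simp add: sum.inter_filter[symmetric] sum_negf)
  finally show ?thesis .
qed

lemma bottleneck_iff_strict_bounds:
  assumes "x \<in> P"
  shows "bottleneck P x \<longleftrightarrow> {y\<in>P. y < x} \<noteq> {} \<and> {y\<in>P. x < y} \<noteq> {}
    \<and> P - {x} = {y\<in>P. y < x} \<union> {y\<in>P. x < y}"
proof -
  have "(\<forall>y\<in>P. x \<le> y \<or> y \<le> x) \<longleftrightarrow> P - {x} \<subseteq> {y\<in>P. y < x} \<union> {y\<in>P. x < y}"
    by (auto simp: less_le)
  then show ?thesis using assms unfolding bottleneck_def by blast
qed

lemma hull_contains_iff_meets_strict_bounds:
  assumes "A \<subseteq> P - {x}"
  shows "x \<in> convex_hull_in P A \<longleftrightarrow> x \<in> P \<and> A \<inter> {y\<in>P. y < x} \<noteq> {} \<and> A \<inter> {y\<in>P. x < y} \<noteq> {}"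
  using assms unfolding convex_hull_in_def by (auto simp: less_le)

lemma sum_alternating_sets_spanning_bottleneck:
  assumes "finite P" "x \<in> P"
  shows "(\<Sum>A | A \<subseteq> P - {x} \<and> x \<in> convex_hull_in P A. (-1::int) ^ card A)
       = (if bottleneck P x then 1 else 0)"
proof -
  let ?D = "{y\<in>P. y < x}" and ?U = "{y\<in>P. x < y}"
  have "{A. A \<subseteq> P - {x} \<and> x \<in> convex_hull_in P A}
      = {A. A \<subseteq> P - {x} \<and> A \<inter> ?D \<noteq> {} \<and> A \<inter> ?U \<noteq> {}}"
    using hull_contains_iff_meets_strict_bounds assms(2) by blast
  moreover have "?D \<subseteq> P - {x}" "?U \<subseteq> P - {x}" "?D \<inter> ?U = {}" by auto
  ultimately show ?thesis
    using sum_alternating_meeting_both[of "P - {x}" ?D ?U] assms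
    by (simp add: bottleneck_iff_strict_bounds)
qed

lemma convex_sets_one_interior_eq_UN:
  "{C. convex_set P C \<and> card (interior_elems C) = 1}
    = (\<Union>x\<in>P. {C. convex_set P C \<and> interior_elems C = {x}})"
proof (intro set_eqI iffI)
  fix C assume "C \<in> {C. convex_set P C \<and> card (interior_elems C) = 1}"
  then obtain x where "convex_set P C" "interior_elems C = {x}" by (auto simp: card_1_singleton_iff)
  moreover from calculation have "x \<in> P"
    using interior_elems_subset[of C] by (auto simp: convex_set_iff)
  ultimately show "C \<in> (\<Union>x\<in>P. {C. convex_set P C \<and> interior_elems C = {x}})" by blast
qed auto

theorem theorem4p9:
  fixes P :: "'a::order set"
  assumes "finite P"
  shows "(\<Sum>S\<in>{C. convex_set P C \<and> card {x. interior_elem C x} = 1}. (-1::int) ^ card S)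
         = - int (card {x. bottleneck P x})"
proof -
  let ?S = "\<lambda>x. {C. convex_set P C \<and> interior_elems C = {x}}"
  have "(\<Sum>S\<in>{C. convex_set P C \<and> card {x. interior_elem C x} = 1}. (-1::int) ^ card S)
      = (\<Sum>x\<in>P. \<Sum>C\<in>?S x. (-1) ^ card C)"
    unfolding interior_elems_def[symmetric] convex_sets_one_interior_eq_UN
    using assms finite_convex_sets[OF assms] by (intro sum.UNION_disjoint) auto
  also have "\<dots> = (\<Sum>x\<in>P. - (if bottleneck P x then 1 else 0))"
    using sum_alternating_sets_spanning[OF assms] sum_alternating_sets_spanning_bottleneck[OF assms]
    by (intro sum.cong) (simp_all add: minus_equation_iff)
  also have "\<dots> = - int (card {x. bottleneck P x})"
    using assms by (simp add: sum_negf sum.If_cases bottleneck_def Int_def conj_commute)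
  finally show ?thesis .
qed

end
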